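(* $\Omega(\eta)$ is equimorphic, as a join-semilattice, to every member of $\mathcal{L_D}$.
   Context: $\Omega(\eta)$ denotes the join-subsemilattice of the direct product $\mathbb{N}\times D$ (componentwise order), where $\mathbb{N}$ is the chain of non-negative integers and $D$ is the chain of dyadic rationals in $[0,1)$, consisting of the pairs $(n,r)$ with $2^n r\in\mathbb{Z}$. A bichain is a triple $B=(X,\leq_1,\leq_2)$ with $\leq_1,\leq_2$ linear orders on a set $X$; $C(B)$ denotes the closure system on $X$ whose closed sets are the sets $I_1\cap I_2$ with $I_k$ an initial segment of $(X,\leq_k)$, ordered by inclusion (an algebraic lattice), and $K(C(B))$ is the join-semilattice of its compact elements (the closures of finite subsets of $X$). $\mathcal{L_D}$ is the class of join-semilattices isomorphic to $K(C(B))$ for some bichain $B$ whose first component $(X,\leq_1)$ has order type $\omega$ and whose second component $(X,\leq_2)$ is not order-scattered (contains a copy of $\mathbb{Q}$). Two join-semilattices are equimorphic as join-semilattices if each embeds into the other by a one-to-one join-preserving map. *)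

theory Defs
  imports "HOL-Library.Order_Continuity"
begin

definition is_join :: "('a \<Rightarrow> 'a \<Rightarrow> bool) \<Rightarrow> 'a set \<Rightarrow> 'a \<Rightarrow> 'a \<Rightarrow> 'a \<Rightarrow> bool" where
  "is_join le S x y z \<longleftrightarrow> z \<in> S \<and> le x z \<and> le y z \<and> (\<forall>w\<in>S. le x w \<and> le y w \<longrightarrow> le z w)"

definition join_semilattice :: "'a set \<Rightarrow> ('a \<Rightarrow> 'a \<Rightarrow> bool) \<Rightarrow> bool" where
  "join_semilattice S le \<longleftrightarrow>
     (\<forall>x\<in>S. le x x) \<and>
     (\<forall>x\<in>S. \<forall>y\<in>S. le x y \<and> le y x \<longrightarrow> x = y) \<and>
     (\<forall>x\<in>S. \<forall>y\<in>S. \<forall>z\<in>S. le x y \<and> le y z \<longrightarrow> le x z) \<and>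
     (\<forall>x\<in>S. \<forall>y\<in>S. \<exists>z. is_join le S x y z)"

definition join_embedding ::
  "('a \<Rightarrow> 'b) \<Rightarrow> 'a set \<Rightarrow> ('a \<Rightarrow> 'a \<Rightarrow> bool) \<Rightarrow> 'b set \<Rightarrow> ('b \<Rightarrow> 'b \<Rightarrow> bool) \<Rightarrow> bool" where
  "join_embedding f S leS T leT \<longleftrightarrow>
     inj_on f S \<and> f ` S \<subseteq> T \<and>
     (\<forall>x\<in>S. \<forall>y\<in>S. \<forall>z\<in>S. is_join leS S x y z \<longrightarrow> is_join leT T (f x) (f y) (f z))"

definition join_equimorphic ::
  "'a set \<Rightarrow> ('a \<Rightarrow> 'a \<Rightarrow> bool) \<Rightarrow> 'b set \<Rightarrow> ('b \<Rightarrow> 'b \<Rightarrow> bool) \<Rightarrow> bool" where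
  "join_equimorphic S leS T leT \<longleftrightarrow>
     (\<exists>f. join_embedding f S leS T leT) \<and> (\<exists>g. join_embedding g T leT S leS)"

definition dyadic_unit :: "rat set" where
  "dyadic_unit = {r. 0 \<le> r \<and> r < 1 \<and> (\<exists>n::nat. \<exists>k::int. (2::rat) ^ n * r = of_int k)}"

definition Omega_eta :: "(nat \<times> rat) set" where
  "Omega_eta = {(n, r). r \<in> dyadic_unit \<and> (\<exists>k::int. (2::rat) ^ n * r = of_int k)}"

definition prod_le :: "nat \<times> rat \<Rightarrow> nat \<times> rat \<Rightarrow> bool" where
  "prod_le p q \<longleftrightarrow> fst p \<le> fst q \<and> snd p \<le> snd q"

definition bichain :: "'a set \<Rightarrow> 'a rel \<Rightarrow> 'a rel \<Rightarrow> bool" where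
  "bichain X r1 r2 \<longleftrightarrow> linear_order_on X r1 \<and> linear_order_on X r2"

definition initial_segment :: "'a set \<Rightarrow> 'a rel \<Rightarrow> 'a set \<Rightarrow> bool" where
  "initial_segment X r I \<longleftrightarrow> I \<subseteq> X \<and> (\<forall>x\<in>I. \<forall>y\<in>X. (y, x) \<in> r \<longrightarrow> y \<in> I)"

definition bichain_closed_sets :: "'a set \<Rightarrow> 'a rel \<Rightarrow> 'a rel \<Rightarrow> 'a set set" where
  "bichain_closed_sets X r1 r2 =
     {I1 \<inter> I2 | I1 I2. initial_segment X r1 I1 \<and> initial_segment X r2 I2}"

definition bichain_closure :: "'a set \<Rightarrow> 'a rel \<Rightarrow> 'a rel \<Rightarrow> 'a set \<Rightarrow> 'a set" where
  "bichain_closure X r1 r2 A = \<Inter> {C \<in> bichain_closed_sets X r1 r2. A \<subseteq> C}"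

text \<open>K(C(B)): the compact elements, i.e. closures of finite subsets of X.\<close>
definition bichain_compacts :: "'a set \<Rightarrow> 'a rel \<Rightarrow> 'a rel \<Rightarrow> 'a set set" where
  "bichain_compacts X r1 r2 =
     {bichain_closure X r1 r2 F | F. finite F \<and> F \<subseteq> X}"

definition has_order_type_omega :: "'a set \<Rightarrow> 'a rel \<Rightarrow> bool" where
  "has_order_type_omega X r \<longleftrightarrow>
     (\<exists>f::nat \<Rightarrow> 'a. bij_betw f UNIV X \<and> (\<forall>i j. (f i, f j) \<in> r \<longleftrightarrow> i \<le> j))"

text \<open>Not order-scattered: contains a copy of the rationals.\<close>
definition contains_copy_of_rat :: "'a set \<Rightarrow> 'a rel \<Rightarrow> bool" where
  "contains_copy_of_rat X r \<longleftrightarrow>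
     (\<exists>g::rat \<Rightarrow> 'a. inj g \<and> range g \<subseteq> X \<and> (\<forall>p q. p \<le> q \<longrightarrow> (g p, g q) \<in> r))"

end

theory Submission
  imports Defs "HOL-Library.Infinite_Set"
begin

text \<open>Enumerate \<open>X\<close> as \<open>e 0, e 1, \<dots>\<close> along \<open>\<le>\<^sub>1\<close>. A nonempty compact closed set is a box
  \<open>{x. idx x \<le> m \<and> x \<le>\<^sub>2 a}\<close> containing its corners \<open>e m\<close> and \<open>a\<close>, and the join of two boxes is the box
  whose corners are the larger rank and the \<open>\<le>\<^sub>2\<close>-larger top. The dyadic number whose \<open>i\<close>-th binary digit
  (\<open>i \<le> idx a\<close>) records \<open>e i \<le>\<^sub>2 a\<close> embeds \<open>(X, \<le>\<^sub>2)\<close> into \<open>D\<close> with denominator \<open>2^(idx a + 1)\<close>, so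
  sending a box to \<open>(m + 1, code a)\<close> embeds \<open>K(C(B))\<close> into \<open>\<Omega>(\<eta>)\<close>. Conversely, given a copy \<open>g\<close> of \<open>\<rat>\<close>
  in \<open>(X, \<le>\<^sub>2)\<close>, send \<open>(n, r)\<close> to the box with corners \<open>e (h n)\<close> and \<open>g r\<close>, where \<open>h\<close> is strictly
  increasing, \<open>e (h n) \<le>\<^sub>2 g 0\<close>, and \<open>h n\<close> dominates the ranks of the finitely many \<open>g r\<close> with
  \<open>(n, r) \<in> \<Omega>(\<eta>)\<close>. Both maps are order embeddings whose images are closed under joins, hence
  join embeddings.\<close>

lemma join_embedding_if_order_embedding:
  assumes le_iff: "\<And>x y. x \<in> S \<Longrightarrow> y \<in> S \<Longrightarrow> leS x y \<longleftrightarrow> leT (f x) (f y)"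
    and into: "f ` S \<subseteq> T"
    and joins: "\<And>x y. x \<in> S \<Longrightarrow> y \<in> S \<Longrightarrow> \<exists>u\<in>S. is_join leT T (f x) (f y) (f u)"
    and reflS: "\<And>x. x \<in> S \<Longrightarrow> leS x x"
    and antisymS: "\<And>x y. leS x y \<Longrightarrow> leS y x \<Longrightarrow> x = y"
    and antisymT: "\<And>x y. leT x y \<Longrightarrow> leT y x \<Longrightarrow> x = y"
  shows "join_embedding f S leS T leT"
proof -
  have "inj_on f S"
    by (rule inj_onI) (metis le_iff reflS antisymS)
  moreover have "is_join leT T (f x) (f y) (f z)"
    if S: "x \<in> S" "y \<in> S" "z \<in> S" and z: "is_join leS S x y z" for x y z
  proof -
    obtain u where "u \<in> S" and u: "is_join leT T (f x) (f y) (f u)"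
      using joins[OF S(1,2)] by blast
    then have "leS z u"
      using z S le_iff unfolding is_join_def by blast
    then have "f z = f u"
      using z u S \<open>u \<in> S\<close> le_iff antisymT into unfolding is_join_def by (meson image_subset_iff)
    with u show ?thesis by simp
  qed
  ultimately show ?thesis
    using into unfolding join_embedding_def by blast
qed

lemma sum_half_powers_from:
  "(\<Sum>i=k..<k+n. (1/2::rat) ^ Suc i) = (1/2) ^ k - (1/2) ^ (k+n)"
proof (induction n)
  case (Suc n)
  have "(\<Sum>i=k..<k+Suc n. (1/2::rat) ^ Suc i) = (\<Sum>i=k..<k+n. (1/2) ^ Suc i) + (1/2) ^ Suc (k+n)"
    by simp
  also have "\<dots> = (1/2) ^ k - (1/2) ^ (k+n) + (1/2) ^ Suc (k+n)"
    by (simp only: Suc.IH)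
  finally show ?case
    by simp
qed simp

lemma sum_half_powers_less:
  assumes "finite A" "\<And>i. i \<in> A \<Longrightarrow> k \<le> i"
  shows "(\<Sum>i\<in>A. (1/2::rat) ^ Suc i) < (1/2) ^ k"
proof -
  obtain n where "A \<subseteq> {..<n}"
    using finite_nat_bounded[OF assms(1)] by blast
  then have "(\<Sum>i\<in>A. (1/2::rat) ^ Suc i) \<le> (\<Sum>i=k..<k+n. (1/2) ^ Suc i)"
    using assms(2) by (intro sum_mono2) auto
  also have "\<dots> < (1/2) ^ k"
    unfolding sum_half_powers_from by simp
  finally show ?thesis .
qed

lemma sum_half_powers_dyadic:
  assumes "finite A" "\<And>i. i \<in> A \<Longrightarrow> i < n"
  shows "\<exists>k::int. 2 ^ n * (\<Sum>i\<in>A. (1/2::rat) ^ Suc i) = of_int k"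
proof -
  have "2 ^ n * (1/2::rat) ^ Suc i = of_int (2 ^ (n - Suc i))" if "i \<in> A" for i
  proof -
    have "n = (n - Suc i) + Suc i"
      using assms(2)[OF that] by simp
    then have "(2::rat) ^ n = 2 ^ (n - Suc i) * 2 ^ Suc i"
      by (metis power_add)
    then show ?thesis by (simp add: power_one_over)
  qed
  then have "2 ^ n * (\<Sum>i\<in>A. (1/2::rat) ^ Suc i) = of_int (\<Sum>i\<in>A. 2 ^ (n - Suc i))"
    by (simp add: sum_distrib_left)
  then show ?thesis by blast
qed

section \<open>The semilattice \<open>\<Omega>(\<eta>)\<close>\<close>

lemma dyadic_level_mono:
  assumes "(2::rat) ^ n * r = of_int k" "n \<le> N"
  shows "\<exists>k'::int. 2 ^ N * r = of_int k'"
proof -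
  have "(2::rat) ^ N * r = 2 ^ (N - n) * (2 ^ n * r)"
    using assms(2) by (simp flip: power_add add: mult.assoc)
  then have "(2::rat) ^ N * r = of_int (2 ^ (N - n) * k)"
    using assms(1) by simp
  then show ?thesis by blast
qed

lemma mem_Omega_eta_iff:
  "(n, r) \<in> Omega_eta \<longleftrightarrow> 0 \<le> r \<and> r < 1 \<and> (\<exists>k::int. 2 ^ n * r = of_int k)"
  by (auto simp: Omega_eta_def dyadic_unit_def)

lemma is_join_Omega_eta:
  assumes "(n, r) \<in> Omega_eta" "(n', r') \<in> Omega_eta"
  shows "is_join prod_le Omega_eta (n, r) (n', r') (max n n', max r r')"
proof -
  have "(max n n', max r r') \<in> Omega_eta"
    using assms dyadic_level_mono[of n r _ "max n n'"] dyadic_level_mono[of n' r' _ "max n n'"]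
    by (auto simp: mem_Omega_eta_iff max_def)
  then show ?thesis
    unfolding is_join_def prod_le_def by simp
qed

lemma is_join_Omega_eta_zero:
  assumes "p \<in> Omega_eta"
  shows "is_join prod_le Omega_eta (0, 0) p p" "is_join prod_le Omega_eta p (0, 0) p"
proof -
  obtain n r where p: "p = (n, r)" "0 \<le> r"
    using assms by (cases p) (simp add: mem_Omega_eta_iff)
  have "(0, 0) \<in> Omega_eta"
    by (simp add: mem_Omega_eta_iff)
  then show "is_join prod_le Omega_eta (0, 0) p p" "is_join prod_le Omega_eta p (0, 0) p"
    using is_join_Omega_eta[of 0 0 n r] is_join_Omega_eta[of n r 0 0] assms p by simp_all
qed

lemma prod_le_antisym: "prod_le p q \<Longrightarrow> prod_le q p \<Longrightarrow> p = q"
  by (simp add: prod_le_def prod_eq_iff)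

lemma finite_Omega_eta_level: "finite {r. (n, r) \<in> Omega_eta}"
proof (rule finite_subset)
  show "{r. (n, r) \<in> Omega_eta} \<subseteq> (\<lambda>k. of_nat k / 2 ^ n) ` {..<2 ^ n}"
  proof
    fix r assume "r \<in> {r. (n, r) \<in> Omega_eta}"
    then obtain k :: int where r: "0 \<le> r" "r < 1" and k: "2 ^ n * r = of_int k"
      by (auto simp: mem_Omega_eta_iff)
    have "0 \<le> k"
      using r k zero_le_mult_iff[of "(2::rat) ^ n" r] by simp
    have "of_int k < (of_int (2 ^ n) :: rat)"
      using r mult_strict_left_mono[of r 1 "(2::rat) ^ n"] by (simp flip: k)
    then have "k < 2 ^ n"
      by (simp only: of_int_less_iff)
    then have "nat k < 2 ^ n"
      using \<open>0 \<le> k\<close> by (simp add: nat_less_iff)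
    moreover have "r = of_nat (nat k) / 2 ^ n"
      using k \<open>0 \<le> k\<close> by (simp add: field_simps)
    ultimately show "r \<in> (\<lambda>k. of_nat k / 2 ^ n) ` {..<2 ^ n}" by blast
  qed
qed simp

section \<open>Dyadic coding of an enumerated chain\<close>

locale enumerated_chain =
  fixes X :: "'a set" and r :: "'a rel" and e :: "nat \<Rightarrow> 'a"
  assumes linear: "linear_order_on X r"
    and enum: "bij_betw e UNIV X"
begin

definition idx :: "'a \<Rightarrow> nat" where
  "idx = inv_into UNIV e"

definition ranks_below :: "'a \<Rightarrow> nat set" where
  "ranks_below x = {i. i \<le> idx x \<and> (e i, x) \<in> r}"

text \<open>The binary digits of \<open>code x\<close> record which of the first \<open>idx x + 1\<close> elements of the
  enumeration lie below \<open>x\<close>; truncating at the rank of \<open>x\<close> bounds its denominator.\<close>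
definition code :: "'a \<Rightarrow> rat" where
  "code x = (\<Sum>i\<in>ranks_below x. (1/2) ^ Suc i)"

definition chain_max :: "'a \<Rightarrow> 'a \<Rightarrow> 'a" where
  "chain_max a b = (if (a, b) \<in> r then b else a)"

lemma e_in [simp]: "e i \<in> X"
  using enum by (auto simp: bij_betw_def)

lemma idx_e [simp]: "idx (e i) = i"
  using enum unfolding idx_def bij_betw_def by (simp add: inv_into_f_f)

lemma e_idx [simp]: "x \<in> X \<Longrightarrow> e (idx x) = x"
  using enum unfolding idx_def bij_betw_def by (simp add: f_inv_into_f)

lemma refl_r: "x \<in> X \<Longrightarrow> (x, x) \<in> r"
  using linear by (auto simp: linear_order_on_def partial_order_on_def preorder_on_def refl_on_def)

lemma trans_r: "(x, y) \<in> r \<Longrightarrow> (y, z) \<in> r \<Longrightarrow> (x, z) \<in> r"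
  using linear by (auto simp: linear_order_on_def partial_order_on_def preorder_on_def elim: transE)

lemma antisym_r: "(x, y) \<in> r \<Longrightarrow> (y, x) \<in> r \<Longrightarrow> x = y"
  using linear by (auto simp: linear_order_on_def partial_order_on_def antisym_def)

lemma total_r: "x \<in> X \<Longrightarrow> y \<in> X \<Longrightarrow> (x, y) \<in> r \<or> (y, x) \<in> r"
  using linear refl_r unfolding linear_order_on_def total_on_def by metis

lemma finite_ranks_below: "finite (ranks_below x)"
  by (rule finite_subset[of _ "{..idx x}"]) (auto simp: ranks_below_def)

lemma code_nonneg: "0 \<le> code x"
  by (simp add: code_def sum_nonneg)

lemma code_less_one: "code x < 1"
  using sum_half_powers_less[OF finite_ranks_below, of x 0] by (simp add: code_def)

lemma code_dyadic:
  assumes "idx x < n"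
  shows "\<exists>k::int. 2 ^ n * code x = of_int k"
  unfolding code_def using assms
  by (intro sum_half_powers_dyadic finite_ranks_below) (auto simp: ranks_below_def)

lemma code_strict_mono:
  assumes x: "x \<in> X" and y: "y \<in> X" and xy: "(x, y) \<in> r" "x \<noteq> y"
  shows "code x < code y"
proof -
  have y_rank: "idx y \<in> ranks_below y"
    using y refl_r by (simp add: ranks_below_def)
  have "idx x \<noteq> idx y"
    using x y xy by (metis e_idx)
  then consider "idx x < idx y" | "idx y < idx x"
    by linarith
  then show ?thesis
  proof cases
    case 1
    have sub: "ranks_below x \<subseteq> ranks_below y"
      using 1 xy by (auto simp: ranks_below_def intro: trans_r)
    have "idx y \<in> ranks_below y - ranks_below x"
      using 1 y_rank by (simp add: ranks_below_def)
    then have "(1/2) ^ Suc (idx y) \<le> (\<Sum>i\<in>ranks_below y - ranks_below x. (1/2::rat) ^ Suc i)"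
      by (intro member_le_sum) (auto intro: finite_ranks_below)
    moreover have "(0::rat) < (1/2) ^ Suc (idx y)"
      by simp
    ultimately show ?thesis
      using sum.subset_diff[OF sub finite_ranks_below, of "\<lambda>i. (1/2::rat) ^ Suc i"]
      unfolding code_def by linarith
  next
    case 2
    \<comment> \<open>Below position \<open>idx y\<close> the digits of \<open>x\<close> are at most those of \<open>y\<close>; at it \<open>x\<close> has a \<open>0\<close> and \<open>y\<close>
      a \<open>1\<close>, which outweighs all later digits of \<open>x\<close>.\<close>
    define L where "L = {i \<in> ranks_below x. i < idx y}"
    define H where "H = {i \<in> ranks_below x. idx y < i}"
    have "idx y \<notin> ranks_below x"
      using xy y by (auto simp: ranks_below_def dest: antisym_r)
    then have "ranks_below x = L \<union> H"
      unfolding L_def H_def by (auto simp: nat_neq_iff) (metis linorder_neqE_nat)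
    then have "code x = (\<Sum>i\<in>L \<union> H. (1/2) ^ Suc i)"
      by (simp only: code_def)
    also have "\<dots> = (\<Sum>i\<in>L. (1/2) ^ Suc i) + (\<Sum>i\<in>H. (1/2) ^ Suc i)"
      using finite_ranks_below[of x] by (intro sum.union_disjoint) (auto simp: L_def H_def)
    also have "\<dots> < (\<Sum>i\<in>L. (1/2) ^ Suc i) + (1/2) ^ Suc (idx y)"
      using sum_half_powers_less[of H "Suc (idx y)"] finite_ranks_below[of x]
      by (simp add: H_def)
    also have "\<dots> = (\<Sum>i\<in>insert (idx y) L. (1/2) ^ Suc i)"
      using finite_ranks_below[of x] by (simp add: L_def)
    also have "\<dots> \<le> code y"
      unfolding code_def using 2 y_rank xy
      by (intro sum_mono2 finite_ranks_below) (auto simp: L_def ranks_below_def intro: trans_r)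
    finally show ?thesis .
  qed
qed

lemma code_le_iff: "x \<in> X \<Longrightarrow> y \<in> X \<Longrightarrow> code x \<le> code y \<longleftrightarrow> (x, y) \<in> r"
  using code_strict_mono total_r refl_r by (metis less_le_not_le order_refl)

lemma le_chain_max: "a \<in> X \<Longrightarrow> b \<in> X \<Longrightarrow> (a, chain_max a b) \<in> r \<and> (b, chain_max a b) \<in> r"
  using total_r refl_r by (auto simp: chain_max_def)

lemma code_chain_max: "a \<in> X \<Longrightarrow> b \<in> X \<Longrightarrow> code (chain_max a b) = max (code a) (code b)"
  using code_le_iff total_r by (auto simp: chain_max_def max_def)

end

section \<open>Compact closed sets of a bichain of type \<open>\<omega>\<close>\<close>

locale omega_bichain = enumerated_chain X r2 e for X :: "'a set" and r2 e +
  fixes r1 :: "'a rel"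
  assumes r1_enum: "(e i, e j) \<in> r1 \<longleftrightarrow> i \<le> j"
begin

abbreviation closed_sets :: "'a set set" where "closed_sets \<equiv> bichain_closed_sets X r1 r2"
abbreviation closure :: "'a set \<Rightarrow> 'a set" where "closure \<equiv> bichain_closure X r1 r2"
abbreviation compacts :: "'a set set" where "compacts \<equiv> bichain_compacts X r1 r2"

definition box :: "nat \<Rightarrow> 'a \<Rightarrow> 'a set" where
  "box m a = {x \<in> X. idx x \<le> m \<and> (x, a) \<in> r2}"

definition corners_in_box :: "nat \<Rightarrow> 'a \<Rightarrow> bool" where
  "corners_in_box m a \<longleftrightarrow> e m \<in> box m a \<and> a \<in> box m a"

lemma corners_in_box_iff: "corners_in_box m a \<longleftrightarrow> a \<in> X \<and> idx a \<le> m \<and> (e m, a) \<in> r2"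
  by (auto simp: corners_in_box_def box_def refl_r)

lemma r1_iff_idx_le: "x \<in> X \<Longrightarrow> y \<in> X \<Longrightarrow> (x, y) \<in> r1 \<longleftrightarrow> idx x \<le> idx y"
  using r1_enum[of "idx x" "idx y"] by simp

lemma finite_box: "finite (box m a)"
  by (rule finite_subset[of _ "e ` {..m}"]) (auto simp: box_def intro!: image_eqI[where x = "idx _"])

lemma box_mono: "m \<le> m' \<Longrightarrow> (a, a') \<in> r2 \<Longrightarrow> box m a \<subseteq> box m' a'"
  by (auto simp: box_def intro: trans_r)

lemma box_closed: "box m a \<in> closed_sets"
proof -
  have "initial_segment X r1 {x \<in> X. idx x \<le> m}"
    unfolding initial_segment_def using r1_iff_idx_le by fastforce
  moreover have "initial_segment X r2 {x \<in> X. (x, a) \<in> r2}"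
    unfolding initial_segment_def using trans_r by blast
  moreover have "box m a = {x \<in> X. idx x \<le> m} \<inter> {x \<in> X. (x, a) \<in> r2}"
    by (auto simp: box_def)
  ultimately show ?thesis
    unfolding bichain_closed_sets_def by blast
qed

lemma box_subset_closed:
  assumes "C \<in> closed_sets" "e m \<in> C" "a \<in> C"
  shows "box m a \<subseteq> C"
proof
  obtain I1 I2 where C: "C = I1 \<inter> I2" and I: "initial_segment X r1 I1" "initial_segment X r2 I2"
    using assms(1) unfolding bichain_closed_sets_def by blast
  fix x assume "x \<in> box m a"
  then have "x \<in> X" "(x, e m) \<in> r1" "(x, a) \<in> r2"
    by (auto simp: box_def r1_iff_idx_le)
  then show "x \<in> C"
    using I assms(2,3) unfolding C initial_segment_def by blast
qed

lemma closure_eq_box: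
  assumes "F \<subseteq> box m a" "e m \<in> F" "a \<in> F"
  shows "closure F = box m a"
  using box_closed box_subset_closed assms unfolding bichain_closure_def by blast

lemma box_compact:
  assumes "corners_in_box m a"
  shows "box m a \<in> compacts"
proof -
  have "closure {e m, a} = box m a"
    using assms by (intro closure_eq_box) (auto simp: corners_in_box_def)
  moreover have "{e m, a} \<subseteq> X"
    using assms by (simp add: corners_in_box_iff)
  ultimately show ?thesis
    unfolding bichain_compacts_def by (metis (mono_tags, lifting) CollectI finite.emptyI finite.insertI)
qed

lemma empty_closed: "{} \<in> closed_sets"
  unfolding bichain_closed_sets_def initial_segment_def by blast

lemma closure_empty: "closure {} = {}"
  using empty_closed unfolding bichain_closure_def by blast

text \<open>The closure of a nonempty finite \<open>F\<close> is the box cornered at the \<open>r1\<close>-largest and the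
  \<open>r2\<close>-largest element of \<open>F\<close>.\<close>
lemma compacts_cases:
  assumes "c \<in> compacts"
  obtains "c = {}" | m a where "corners_in_box m a" "c = box m a"
proof -
  obtain F where c: "c = closure F" and F: "finite F" "F \<subseteq> X"
    using assms unfolding bichain_compacts_def by blast
  show ?thesis
  proof (cases "F = {}")
    case True
    then show ?thesis
      using c closure_empty that(1) by simp
  next
    case False
    define m where "m = Max (idx ` F)"
    have "Max (code ` F) \<in> code ` F"
      using F False by simp
    then obtain a where a: "a \<in> F" "code a = Max (code ` F)"
      by auto
    have "m \<in> idx ` F"
      using F False by (simp add: m_def)
    then have "e m \<in> F"
      using F by auto
    moreover have "F \<subseteq> box m a"
    proof
      fix x assume x: "x \<in> F"
      have "code x \<le> code a"
        using F a x by simp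
      then have "(x, a) \<in> r2"
        using code_le_iff[of x a] x a F by blast
      moreover have "idx x \<le> m"
        using F x by (simp add: m_def)
      ultimately show "x \<in> box m a"
        using x F by (auto simp: box_def)
    qed
    ultimately show ?thesis
      using that(2)[of m a] c a(1) closure_eq_box by (auto simp: corners_in_box_def)
  qed
qed

lemma compact_closed: "c \<in> compacts \<Longrightarrow> c \<in> closed_sets"
  by (elim compacts_cases) (simp_all add: empty_closed box_closed)

lemma box_subset_box_iff:
  assumes "corners_in_box m a"
  shows "box m a \<subseteq> box m' a' \<longleftrightarrow> m \<le> m' \<and> (a, a') \<in> r2"
proof
  assume "box m a \<subseteq> box m' a'"
  then have "e m \<in> box m' a'" "a \<in> box m' a'"
    using assms by (auto simp: corners_in_box_def)
  then show "m \<le> m' \<and> (a, a') \<in> r2"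
    by (simp add: box_def)
qed (use box_mono in blast)

lemma corners_in_box_max:
  assumes "corners_in_box m a" "corners_in_box m' a'"
  shows "corners_in_box (max m m') (chain_max a a')"
  using assms le_chain_max[of a a'] by (auto simp: corners_in_box_iff chain_max_def max_def intro: trans_r)

lemma is_join_box:
  assumes "corners_in_box m a" "corners_in_box m' a'"
  shows "is_join (\<subseteq>) compacts (box m a) (box m' a') (box (max m m') (chain_max a a'))"
proof -
  have "a \<in> X" "a' \<in> X"
    using assms by (simp_all add: corners_in_box_iff)
  then have "box m a \<subseteq> box (max m m') (chain_max a a')" "box m' a' \<subseteq> box (max m m') (chain_max a a')"
    using box_mono le_chain_max by simp_all
  moreover have "box (max m m') (chain_max a a') \<subseteq> C"
    if "C \<in> compacts" "box m a \<subseteq> C" "box m' a' \<subseteq> C" for C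
  proof (rule box_subset_closed)
    show "C \<in> closed_sets"
      using that(1) by (rule compact_closed)
    show "e (max m m') \<in> C" "chain_max a a' \<in> C"
      using assms that(2,3) by (auto simp: corners_in_box_def max_def chain_max_def)
  qed
  ultimately show ?thesis
    using box_compact[OF corners_in_box_max[OF assms]] unfolding is_join_def by blast
qed

definition compact_code :: "'a set \<Rightarrow> nat \<times> rat" where
  "compact_code c = (if c = {} then (0, 0) else (Suc (Max (idx ` c)), Max (code ` c)))"

lemma compact_code_box:
  assumes "corners_in_box m a"
  shows "compact_code (box m a) = (Suc m, code a)"
proof -
  have "e m \<in> box m a" "a \<in> box m a"
    using assms by (simp_all add: corners_in_box_def)
  moreover have "Max (idx ` box m a) = m"
    using \<open>e m \<in> box m a\<close> finite_box image_eqI[of m idx "e m"] by (intro Max_eqI) (auto simp: box_def)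
  moreover have "Max (code ` box m a) = code a"
    using \<open>a \<in> box m a\<close> finite_box by (intro Max_eqI) (auto simp: box_def code_le_iff corners_in_box_iff)
  ultimately show ?thesis
    by (auto simp: compact_code_def)
qed

lemma compact_code_in_Omega_eta:
  assumes "c \<in> compacts"
  shows "compact_code c \<in> Omega_eta"
  using assms
proof (cases rule: compacts_cases)
  case 1
  then show ?thesis
    by (simp add: compact_code_def mem_Omega_eta_iff)
next
  case (2 m a)
  then show ?thesis
    using code_nonneg code_less_one code_dyadic[of a "Suc m"]
    by (simp add: compact_code_box mem_Omega_eta_iff corners_in_box_iff)
qed

lemma compact_code_le_iff:
  assumes "c \<in> compacts" "c' \<in> compacts"
  shows "c \<subseteq> c' \<longleftrightarrow> prod_le (compact_code c) (compact_code c')"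
  using assms(1)
proof (cases rule: compacts_cases)
  case 1
  then show ?thesis
    using compact_code_in_Omega_eta[OF assms(2)]
    by (cases "compact_code c'") (simp add: compact_code_def prod_le_def mem_Omega_eta_iff)
next
  case c: (2 m a)
  from assms(2) show ?thesis
  proof (cases rule: compacts_cases)
    case 1
    then show ?thesis
      using c by (auto simp: compact_code_box compact_code_def prod_le_def corners_in_box_def)
  next
    case (2 m' a')
    then show ?thesis
      using c by (simp add: compact_code_box prod_le_def box_subset_box_iff code_le_iff corners_in_box_iff)
  qed
qed

lemma compact_code_joins:
  assumes "c \<in> compacts" "c' \<in> compacts"
  shows "\<exists>u\<in>compacts. is_join prod_le Omega_eta (compact_code c) (compact_code c') (compact_code u)"
  using assms(1)
proof (cases rule: compacts_cases)
  case 1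
  then have "is_join prod_le Omega_eta (compact_code c) (compact_code c') (compact_code c')"
    using is_join_Omega_eta_zero(1)[OF compact_code_in_Omega_eta[OF assms(2)]]
    by (simp add: compact_code_def)
  then show ?thesis
    using assms(2) by blast
next
  case c: (2 m a)
  from assms(2) show ?thesis
  proof (cases rule: compacts_cases)
    case 1
    then have "is_join prod_le Omega_eta (compact_code c) (compact_code c') (compact_code c)"
      using is_join_Omega_eta_zero(2)[OF compact_code_in_Omega_eta[OF assms(1)]]
      by (simp add: compact_code_def)
    then show ?thesis
      using assms(1) by blast
  next
    case c': (2 m' a')
    note corners = corners_in_box_max[OF c(1) c'(1)]
    have "code (chain_max a a') = max (code a) (code a')"
      using c(1) c'(1) by (simp add: code_chain_max corners_in_box_iff)
    then have "is_join prod_le Omega_eta (compact_code c) (compact_code c')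
        (compact_code (box (max m m') (chain_max a a')))"
      using c c' is_join_Omega_eta[of "Suc m" "code a" "Suc m'" "code a'"]
        compact_code_in_Omega_eta[OF assms(1)] compact_code_in_Omega_eta[OF assms(2)]
      by (simp add: compact_code_box[OF corners] compact_code_box)
    then show ?thesis
      using box_compact[OF corners] by blast
  qed
qed

theorem compacts_join_embedding_Omega_eta:
  "join_embedding compact_code compacts (\<subseteq>) Omega_eta prod_le"
  using compact_code_le_iff compact_code_in_Omega_eta compact_code_joins prod_le_antisym
  by (intro join_embedding_if_order_embedding) auto

end

section \<open>Embedding \<open>\<Omega>(\<eta>)\<close> into the compact closed sets\<close>

lemma exists_strict_mono_in_dominating:
  assumes "infinite (S :: nat set)"
  obtains h :: "nat \<Rightarrow> nat" where "strict_mono h" "range h \<subseteq> S" "\<And>n. b n \<le> h n"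
proof
  let ?a = "\<lambda>n. n + (\<Sum>k\<le>n. b k)"
  have "strict_mono ?a"
    unfolding strict_mono_Suc_iff by simp
  then show "strict_mono (\<lambda>n. enumerate S (?a n))"
    using assms by (simp add: strict_mono_def)
  show "range (\<lambda>n. enumerate S (?a n)) \<subseteq> S"
    using assms enumerate_in_set by blast
  fix n
  have "b n \<le> ?a n"
    using member_le_sum[of n "{..n}" b] by simp
  also have "\<dots> \<le> enumerate S (?a n)"
    using assms by (rule le_enumerate)
  finally show "b n \<le> enumerate S (?a n)" .
qed

locale omega_bichain_with_rationals = omega_bichain X r2 e r1 for X :: "'a set" and r2 e r1 +
  fixes g :: "rat \<Rightarrow> 'a"
  assumes g_inj: "inj g"
    and g_in [simp]: "g q \<in> X"
    and g_mono: "p \<le> q \<Longrightarrow> (g p, g q) \<in> r2"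
begin

lemma g_le_iff: "(g p, g q) \<in> r2 \<longleftrightarrow> p \<le> q"
proof
  assume "(g p, g q) \<in> r2"
  moreover have "(g q, g p) \<in> r2" "g q \<noteq> g p" if "q < p"
    using that g_mono g_inj by (auto dest: injD)
  ultimately show "p \<le> q"
    using antisym_r by force
qed (rule g_mono)

lemma g_max: "g (max p q) = chain_max (g p) (g q)"
  by (simp add: max_def chain_max_def g_le_iff)

lemma infinite_below_g0: "infinite {i. (e i, g 0) \<in> r2}"
proof -
  let ?u = "\<lambda>n::nat. idx (g (- of_nat n))"
  have "inj ?u"
  proof (rule injI)
    fix m n assume "?u m = ?u n"
    then have "g (- of_nat m) = g (- of_nat n)"
      using g_in by (metis e_idx)
    then show "m = n"
      using g_inj by (auto dest: injD)
  qed
  moreover have "range ?u \<subseteq> {i. (e i, g 0) \<in> r2}"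
    by (auto simp: g_le_iff)
  ultimately show ?thesis
    using range_inj_infinite finite_subset by blast
qed

lemma box_join_embedding:
  assumes h: "strict_mono h"
    and h_idx: "\<And>n r. (n, r) \<in> Omega_eta \<Longrightarrow> idx (g r) \<le> h n"
    and h_below: "\<And>n. (e (h n), g 0) \<in> r2"
  shows "join_embedding (\<lambda>(n, r). box (h n) (g r)) Omega_eta prod_le compacts (\<subseteq>)"
proof -
  define f where "f = (\<lambda>(n, r). box (h n) (g r))"
  have corners: "corners_in_box (h n) (g r)" if "(n, r) \<in> Omega_eta" for n r
  proof -
    have "(e (h n), g r) \<in> r2"
      using that trans_r[OF h_below g_mono[of 0 r]] by (simp add: mem_Omega_eta_iff)
    then show ?thesis
      using that h_idx by (simp add: corners_in_box_iff)
  qed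
  have le_iff: "prod_le p q \<longleftrightarrow> f p \<subseteq> f q" if "p \<in> Omega_eta" "q \<in> Omega_eta" for p q
    using that corners[of "fst p" "snd p"]
    by (simp add: f_def prod_le_def box_subset_box_iff strict_mono_less_eq[OF h] g_le_iff split_beta)
  have joins: "\<exists>u\<in>Omega_eta. is_join (\<subseteq>) compacts (f p) (f q) (f u)"
    if "p \<in> Omega_eta" "q \<in> Omega_eta" for p q
  proof -
    obtain n r n' r' where p: "p = (n, r)" and q: "q = (n', r')"
      by fastforce
    have "h (max n n') = max (h n) (h n')"
      using max_of_mono[OF strict_mono_mono[OF h]] by simp
    then have "is_join (\<subseteq>) compacts (f p) (f q) (f (max n n', max r r'))"
      using is_join_box[OF corners corners] that unfolding p q f_def by (simp add: g_max)
    moreover have "(max n n', max r r') \<in> Omega_eta"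
      using is_join_Omega_eta that unfolding p q is_join_def by blast
    ultimately show ?thesis
      by blast
  qed
  have "f ` Omega_eta \<subseteq> compacts"
    using corners box_compact by (auto simp: f_def)
  then have "join_embedding f Omega_eta prod_le compacts (\<subseteq>)"
    using le_iff joins prod_le_antisym
    by (intro join_embedding_if_order_embedding) (auto simp: prod_le_def)
  then show ?thesis
    by (simp add: f_def)
qed

theorem Omega_eta_join_embedding_compacts:
  "\<exists>f. join_embedding f Omega_eta prod_le compacts (\<subseteq>)"
proof -
  define b where "b n = Max (idx ` g ` {r. (n, r) \<in> Omega_eta})" for n
  obtain h where h: "strict_mono h" "range h \<subseteq> {i. (e i, g 0) \<in> r2}" "\<And>n. b n \<le> h n"
    by (rule exists_strict_mono_in_dominating[OF infinite_below_g0, of b]) (rule that)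
  have h_idx: "idx (g r) \<le> h n" if "(n, r) \<in> Omega_eta" for n r
  proof -
    have "idx (g r) \<le> b n"
      unfolding b_def using that finite_Omega_eta_level[of n] by (intro Max_ge) auto
    then show ?thesis
      using h(3)[of n] by linarith
  qed
  have h_below: "(e (h n), g 0) \<in> r2" for n
    using h(2) by blast
  show ?thesis
    using box_join_embedding[OF h(1) h_idx h_below] by blast
qed

end

theorem theorem8p3:
  fixes X :: "'a set" and r1 r2 :: "'a rel"
  assumes "bichain X r1 r2"
    and "has_order_type_omega X r1"
    and "contains_copy_of_rat X r2"
  shows "join_equimorphic Omega_eta prod_le
           (bichain_compacts X r1 r2) (\<subseteq>)"
proof -
  obtain e :: "nat \<Rightarrow> 'a" where e: "bij_betw e UNIV X" "\<And>i j. (e i, e j) \<in> r1 \<longleftrightarrow> i \<le> j"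
    using assms(2) unfolding has_order_type_omega_def by blast
  obtain g :: "rat \<Rightarrow> 'a" where g: "inj g" "range g \<subseteq> X" "\<And>p q. p \<le> q \<Longrightarrow> (g p, g q) \<in> r2"
    using assms(3) unfolding contains_copy_of_rat_def by blast
  interpret omega_bichain_with_rationals X r2 e r1 g
    using assms(1) e g by unfold_locales (auto simp: bichain_def)
  show ?thesis
    unfolding join_equimorphic_def
    using Omega_eta_join_embedding_compacts compacts_join_embedding_Omega_eta by blast
qed

end
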